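(* Let $\mathcal{M} = \{ t \in \mathbb{C}_2 : \text{the forward orbits of both critical points } 0 \text{ and } 1 \text{ under } f_t \text{ are bounded}\}$. Then $1 \in \mathcal{M}$, and $t = 1$ is a non-isolated boundary point of $\mathcal{M}$. That is, every $2$-adic neighborhood of $1$ in $\mathbb{C}_2$ contains parameters $t \notin \mathcal{M}$ and also parameters $t \in \mathcal{M}$ with $t \neq 1$.
   Context: Let $|\cdot|$ denote the $2$-adic absolute value on $\mathbb{C}_2$, normalized by $|2| = 1/2$. For $t \in \mathbb{C}_2$, let $f_t(z) = -\tfrac32 t(-2z^3+3z^2) + 1 \in \mathbb{C}_2[z]$. The critical points of $f_t$ are $0$ and $1$. Since $f_t(0) = 1$, the orbit of $0$ is bounded if and only if the orbit of $1$ is bounded. The forward orbit of $z$ under $f$ is $\{f^n(z) : n \ge 0\}$, where $f^n$ is the $n$-fold iterate of $f$. A map is called post-critically bounded (PCB) if all critical points have bounded forward orbits, and post-critically finite (PCF) if all critical points have finite forward orbits. *)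

theory Defs
  imports "HOL-Computational_Algebra.Polynomial"
begin

text \<open>C_2 is characterized up to isometric isomorphism as a field of characteristic 0
with a non-archimedean absolute value restricting to the 2-adic absolute value on the
integers (|2| = 1/2, |odd| = 1), which is complete, algebraically closed, and in which
the algebraic numbers (over Q) are dense.  The theorem is stated for every such field.\<close>

definition is_algebraic_num :: "'a::field_char_0 \<Rightarrow> bool" where
  "is_algebraic_num y \<longleftrightarrow> (\<exists>p::int poly. p \<noteq> 0 \<and> poly (map_poly of_int p) y = 0)"

definition is_C2_model :: "('a::field_char_0 \<Rightarrow> real) \<Rightarrow> bool" where
  "is_C2_model absv \<longleftrightarrow>
     (\<forall>x. absv x \<ge> 0) \<and> (\<forall>x. absv x = 0 \<longleftrightarrow> x = 0) \<and>
     (\<forall>x y. absv (x * y) = absv x * absv y) \<and>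
     (\<forall>x y. absv (x + y) \<le> max (absv x) (absv y)) \<and>
     absv 2 = 1/2 \<and>
     (\<forall>n::int. odd n \<longrightarrow> absv (of_int n) = 1) \<and>
     (\<forall>X::nat \<Rightarrow> 'a. (\<forall>e>0. \<exists>N. \<forall>m\<ge>N. \<forall>n\<ge>N. absv (X m - X n) < e)
          \<longrightarrow> (\<exists>L. \<forall>e>0. \<exists>N. \<forall>n\<ge>N. absv (X n - L) < e)) \<and>
     (\<forall>p::'a poly. degree p > 0 \<longrightarrow> (\<exists>z. poly p z = 0)) \<and>
     (\<forall>x e. e > 0 \<longrightarrow> (\<exists>y. is_algebraic_num y \<and> absv (x - y) < e))"

definition fmap :: "'a::field_char_0 \<Rightarrow> 'a \<Rightarrow> 'a" where
  "fmap t z = - (3/2) * t * (- 2 * z ^ 3 + 3 * z ^ 2) + 1"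

definition bounded_orbit :: "('a::field_char_0 \<Rightarrow> real) \<Rightarrow> 'a \<Rightarrow> 'a \<Rightarrow> bool" where
  "bounded_orbit absv t z \<longleftrightarrow> (\<exists>B. \<forall>n. absv ((fmap t ^^ n) z) \<le> B)"

definition PCB_locus :: "('a::field_char_0 \<Rightarrow> real) \<Rightarrow> 'a set" where
  "PCB_locus absv = {t. bounded_orbit absv t 0 \<and> bounded_orbit absv t 1}"

end

theory Submission
  imports Defs
begin

text \<open>Write t = 1 + s. In the coordinate u = z + 1/2 the orbit of the critical value f(1) is
u(0) = -3s/2, u(n+1) = u(0) + 3t u(n) (u(n) - 3/2)^2. For small s \<noteq> 0 the ultrametric
inequality gives |u(n)| = 2 4^n |s| as long as this is at most 4; once an iterate has absolute
value above 2 we have |f(z)| = |z|^3 and the orbit escapes. So t = 1 + 2 4^m is not in the locus.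

On the other hand u(n) = s V(n, s) for a polynomial V(n) with |V(n, 0)| = 2 4^n. Over an
algebraically closed ultrametric field a polynomial without roots in a closed disc has constant
absolute value on it. Since |V(m+2)| differs at 0 and at s = 2 4^m, it has a root r with
0 < |r| \<le> |s|. For t = 1 + r the critical orbit lands on -1/2, the other preimage of f(1), so
it is periodic; t = 1 is the case f(1) = -1/2.\<close>

locale ultrametric_absv =
  fixes absv :: "'a::field_char_0 \<Rightarrow> real"
  assumes absv_nonneg: "0 \<le> absv x"
    and absv_eq_0_iff [simp]: "absv x = 0 \<longleftrightarrow> x = 0"
    and absv_mult [simp]: "absv (x * y) = absv x * absv y"
    and absv_add_le_max: "absv (x + y) \<le> max (absv x) (absv y)"
begin

lemma absv_0 [simp]: "absv 0 = 0"
  by simp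

lemma absv_pos: "x \<noteq> 0 \<Longrightarrow> 0 < absv x"
  using absv_nonneg[of x] absv_eq_0_iff[of x] by linarith

lemma absv_1 [simp]: "absv 1 = 1"
proof -
  have "absv 1 * absv 1 = absv 1 * 1" using absv_mult[of 1 1] by simp
  moreover have "absv 1 \<noteq> 0" by simp
  ultimately show ?thesis by (metis mult_left_cancel)
qed

lemma absv_minus_1: "absv (-1) = 1"
proof -
  have "absv (-1) ^ 2 = 1" using absv_mult[of "-1" "-1"] by (simp add: power2_eq_square)
  then show ?thesis using absv_nonneg[of "-1"] by (simp add: power2_eq_1_iff)
qed

lemma absv_minus [simp]: "absv (- x) = absv x"
  using absv_mult[of "-1" x] absv_minus_1 by simp

lemma absv_inverse [simp]: "absv (inverse x) = inverse (absv x)"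
proof (cases "x = 0")
  case False
  then have "absv x * absv (inverse x) = 1" using absv_mult[of x "inverse x"] by simp
  then show ?thesis by (rule inverse_unique[symmetric])
qed simp

lemma absv_divide [simp]: "absv (x / y) = absv x / absv y"
  by (simp add: divide_inverse)

lemma absv_power [simp]: "absv (x ^ n) = absv x ^ n"
  by (induction n) simp_all

lemma absv_add_eq_left:
  assumes "absv y < absv x"
  shows "absv (x + y) = absv x"
proof (rule antisym)
  show "absv (x + y) \<le> absv x" using absv_add_le_max[of x y] assms by simp
  have "absv x \<le> max (absv (x + y)) (absv (- y))" using absv_add_le_max[of "x + y" "- y"] by simp
  then show "absv x \<le> absv (x + y)" using assms by (simp add: max_def split: if_splits)
qed

lemma absv_add_eq_right: "absv x < absv y \<Longrightarrow> absv (x + y) = absv y"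
  using absv_add_eq_left[of x y] by (simp add: add.commute)

lemma absv_diff_eq_left: "absv y < absv x \<Longrightarrow> absv (x - y) = absv x"
  using absv_add_eq_left[of "- y" x] by simp

lemma absv_diff_eq_right: "absv x < absv y \<Longrightarrow> absv (x - y) = absv y"
  using absv_add_eq_right[of x "- y"] by simp

lemma absv_eq_1_if_near_1: "absv (t - 1) < 1 \<Longrightarrow> absv t = 1"
  using absv_add_eq_left[of "t - 1" 1] by simp

lemma absv_poly_eq_if_no_root_in_disc:
  assumes alg_closed: "\<And>p::'a poly. 0 < degree p \<Longrightarrow> \<exists>z. poly p z = 0"
    and no_root: "\<And>r. poly P r = 0 \<Longrightarrow> \<rho> < absv r"
    and "absv s \<le> \<rho>" "absv s' \<le> \<rho>"
  shows "absv (poly P s) = absv (poly P s')"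
  using no_root
proof (induction "degree P" arbitrary: P)
  case 0
  then obtain c where "P = [:c:]" by (metis degree_eq_zeroE)
  then show ?case by simp
next
  case (Suc n)
  obtain r where root: "poly P r = 0" using alg_closed[of P] Suc.hyps(2) by auto
  then obtain Q where P_eq: "P = [:-r, 1:] * Q" using poly_eq_0_iff_dvd by blast
  have "P \<noteq> 0" using Suc.hyps(2) by auto
  then have "Q \<noteq> 0" using P_eq by auto
  then have "degree P = Suc (degree Q)"
    unfolding P_eq by (simp add: degree_mult_eq del: mult_pCons_left)
  then have "n = degree Q" using Suc.hyps(2) by simp
  moreover have "\<And>r'. poly Q r' = 0 \<Longrightarrow> \<rho> < absv r'" using Suc.prems P_eq by simp
  ultimately have "absv (poly Q s) = absv (poly Q s')" by (rule Suc.hyps(1))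
  moreover have "absv (s - r) = absv (s' - r)"
    using absv_diff_eq_right Suc.prems[OF root] assms(3,4) by (metis order.strict_trans1)
  moreover have "poly P x = (x - r) * poly Q x" for x
    unfolding P_eq by (simp add: algebra_simps)
  ultimately show ?case by (simp only: absv_mult)
qed

lemma poly_has_root_in_disc:
  assumes alg_closed: "\<And>p::'a poly. 0 < degree p \<Longrightarrow> \<exists>z. poly p z = 0"
    and "absv s \<le> \<rho>" "absv (poly P s) \<noteq> absv (poly P 0)"
  shows "\<exists>r. poly P r = 0 \<and> absv r \<le> \<rho>"
  using absv_poly_eq_if_no_root_in_disc[OF alg_closed, of P \<rho> s 0] assms(2,3) absv_nonneg[of s]
  by force

end

lemma funpow_orbit_subset_if_periodic:
  fixes f :: "'a \<Rightarrow> 'a"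
  assumes periodic: "(f ^^ (k + p)) x = (f ^^ k) x" and "0 < p"
  shows "(f ^^ n) x \<in> (\<lambda>j. (f ^^ j) x) ` {..<k + p}"
proof (induction n rule: less_induct)
  case (less n)
  show ?case
  proof (cases "n < k + p")
    case False
    define a where "a = n - (k + p)"
    have n: "n = a + (k + p)" using False unfolding a_def by simp
    have "(f ^^ n) x = (f ^^ a) ((f ^^ (k + p)) x)"
      unfolding n funpow_add comp_apply ..
    also have "\<dots> = (f ^^ a) ((f ^^ k) x)"
      unfolding periodic ..
    also have "\<dots> = (f ^^ (n - p)) x"
      unfolding n by (simp add: funpow_add)
    finally show ?thesis using less.IH[of "n - p"] n \<open>0 < p\<close> by simp
  qed simp
qed

lemma bounded_orbit_if_periodic:
  assumes "(fmap t ^^ (k + p)) z = (fmap t ^^ k) z" "0 < p"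
  shows "bounded_orbit absv t z"
proof -
  let ?B = "Max ((\<lambda>j. absv ((fmap t ^^ j) z)) ` {..<k + p})"
  have "absv ((fmap t ^^ n) z) \<le> ?B" for n
    using funpow_orbit_subset_if_periodic[OF assms, of n] by auto
  then show ?thesis unfolding bounded_orbit_def by blast
qed

lemma bounded_orbit_funpow:
  assumes "bounded_orbit absv t z"
  shows "bounded_orbit absv t ((fmap t ^^ N) z)"
proof -
  obtain B where "\<And>n. absv ((fmap t ^^ n) z) \<le> B"
    using assms unfolding bounded_orbit_def by blast
  then have "absv ((fmap t ^^ n) ((fmap t ^^ N) z)) \<le> B" for n
    by (metis funpow_add comp_apply)
  then show ?thesis unfolding bounded_orbit_def by blast
qed

lemma PCB_locus_iff_bounded_orbit_1:
  "t \<in> PCB_locus absv \<longleftrightarrow> bounded_orbit absv t 1"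
proof -
  have shift: "(fmap t ^^ Suc n) 0 = (fmap t ^^ n) 1" for n
    by (simp add: funpow_Suc_right fmap_def del: funpow.simps)
  have "bounded_orbit absv t 0" if bounded_1: "bounded_orbit absv t 1"
  proof -
    obtain B where B: "\<And>n. absv ((fmap t ^^ n) 1) \<le> B"
      using bounded_1 unfolding bounded_orbit_def by blast
    have "absv ((fmap t ^^ n) 0) \<le> max (absv 0) B" for n
      using B shift by (cases n) (auto simp del: funpow.simps intro: max.coboundedI2)
    then show ?thesis unfolding bounded_orbit_def by blast
  qed
  moreover have "bounded_orbit absv t 1" if "bounded_orbit absv t 0"
    using bounded_orbit_funpow[OF that, of 1] by (simp add: fmap_def)
  ultimately show ?thesis unfolding PCB_locus_def by blast
qed

lemma fmap_minus_half: "fmap t (-1/2) = fmap t 1"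
  unfolding fmap_def by (simp add: field_simps power2_eq_square power3_eq_cube)

lemma PCB_locus_if_critical_orbit_hits_minus_half:
  assumes "(fmap t ^^ Suc n) 1 = -1/2"
  shows "t \<in> PCB_locus absv"
proof -
  have "(fmap t ^^ (1 + Suc n)) 1 = (fmap t ^^ 1) 1"
    using assms fmap_minus_half[of t] by simp
  then show ?thesis
    unfolding PCB_locus_iff_bounded_orbit_1 by (rule bounded_orbit_if_periodic) simp
qed

definition centered_orbit :: "'a::field_char_0 \<Rightarrow> nat \<Rightarrow> 'a" where
  "centered_orbit t n = (fmap t ^^ Suc n) 1 + 1/2"

lemma fmap_centered: "fmap t (u - 1/2) + 1/2 = -3/2 * (t - 1) + 3 * t * u * (u - 3/2)^2"
  unfolding fmap_def by (simp add: field_simps power2_eq_square power3_eq_cube)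

lemma centered_orbit_0: "centered_orbit t 0 = -3/2 * (t - 1)"
  unfolding centered_orbit_def fmap_def by (simp add: field_simps)

lemma centered_orbit_Suc:
  "centered_orbit t (Suc n) =
     -3/2 * (t - 1) + 3 * t * centered_orbit t n * (centered_orbit t n - 3/2)^2"
proof -
  have "centered_orbit t (Suc n) = fmap t (centered_orbit t n - 1/2) + 1/2"
    unfolding centered_orbit_def by simp
  then show ?thesis by (simp only: fmap_centered)
qed

fun orbit_poly :: "nat \<Rightarrow> 'a::field_char_0 poly" where
  "orbit_poly 0 = [:-3/2:]"
| "orbit_poly (Suc n) =
     [:-3/2:] + smult 3 ([:1, 1:] * orbit_poly n * ([:0, 1:] * orbit_poly n - [:3/2:])^2)"

lemma centered_orbit_eq_poly: "centered_orbit (1 + s) n = s * poly (orbit_poly n) s"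
proof (induction n)
  case 0
  show ?case by (simp add: centered_orbit_0)
next
  case (Suc n)
  show ?case
    unfolding centered_orbit_Suc Suc.IH by (simp add: algebra_simps)
qed

locale two_adic_absv = ultrametric_absv +
  assumes absv_2: "absv 2 = 1/2"
    and absv_odd: "odd n \<Longrightarrow> absv (of_int n) = 1"
begin

lemma absv_numeral_Bit0 [simp]: "absv (numeral (Num.Bit0 k)) = absv (numeral k) / 2"
proof -
  have "absv (numeral (Num.Bit0 k)) = absv (2 * numeral k)"
    by (simp only: numeral_Bit0[of k] mult_2)
  also have "\<dots> = absv (numeral k) / 2"
    by (simp only: absv_mult absv_2)
  finally show ?thesis .
qed

lemma absv_numeral_Bit1 [simp]: "absv (numeral (Num.Bit1 k)) = 1"
  using absv_odd[of "numeral (Num.Bit1 k)"] by simp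

lemma absv_fmap_escaping:
  assumes "absv t = 1" "2 < absv z"
  shows "absv (fmap t z) = absv z ^ 3"
proof -
  have "fmap t z = 3 * t * z^3 + (1 - 9/2 * t * z^2)"
    unfolding fmap_def by (simp add: field_simps)
  moreover have "absv (1 - 9/2 * t * z^2) < absv (3 * t * z^3)"
  proof -
    have "absv (1 - 9/2 * t * z^2) \<le> max 1 (2 * absv z ^ 2)"
      using absv_add_le_max[of 1 "- (9/2 * t * z^2)"] assms(1) by simp
    also have "\<dots> < absv z ^ 3"
      using assms(2) by (simp add: power2_eq_square power3_eq_cube less_1_mult)
    finally show ?thesis using assms(1) by simp
  qed
  ultimately show ?thesis using absv_add_eq_left assms(1) by simp
qed

lemma not_bounded_orbit_if_escaping:
  assumes "absv t = 1" "2 < absv z"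
  shows "\<not> bounded_orbit absv t z"
proof
  have growth: "absv z + n \<le> absv ((fmap t ^^ n) z)" for n
  proof (induction n)
    case (Suc n)
    let ?w = "(fmap t ^^ n) z"
    have w: "2 < absv ?w" using Suc assms(2) by simp
    then have "2 * 2 < absv ?w * absv ?w" by (intro mult_strict_mono) auto
    then have "absv ?w * 4 < absv ?w * (absv ?w * absv ?w)"
      using w by (intro mult_strict_left_mono) auto
    then have "absv ?w + 1 < absv ?w ^ 3"
      using w unfolding power3_eq_cube mult.assoc by linarith
    then show ?case using Suc absv_fmap_escaping[OF assms(1) \<open>2 < absv ?w\<close>] by simp
  qed simp
  assume "bounded_orbit absv t z"
  then obtain B where "\<And>n. absv ((fmap t ^^ n) z) \<le> B"
    unfolding bounded_orbit_def by blast
  moreover obtain n :: nat where "B < n" using reals_Archimedean2 by blast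
  ultimately show False using growth[of n] absv_nonneg[of z] by (smt (verit))
qed

lemma absv_centered_orbit_0: "absv (centered_orbit t 0) = 2 * absv (t - 1)"
  unfolding centered_orbit_0 absv_mult by simp

lemma absv_centered_orbit:
  assumes "absv (t - 1) < 1" "t \<noteq> 1" "4^j * absv (t - 1) \<le> 2"
  shows "absv (centered_orbit t j) = 2 * 4^j * absv (t - 1)"
  using assms(3)
proof (induction j)
  case 0
  show ?case by (simp add: absv_centered_orbit_0)
next
  case (Suc j)
  let ?u = "centered_orbit t j"
  have "absv t = 1" using absv_eq_1_if_near_1 assms(1) .
  have "4 * (4^j * absv (t - 1)) \<le> 2" using Suc.prems by (simp add: mult.assoc)
  moreover have "0 \<le> 4^j * absv (t - 1)" using absv_nonneg by simp
  ultimately have bound: "4^j * absv (t - 1) \<le> 1/2" by linarith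
  then have u: "absv ?u = 2 * 4^j * absv (t - 1)" using Suc.IH by simp
  then have "absv ?u \<le> 1" using bound by simp
  then have "absv (?u - 3/2) = 2" using absv_diff_eq_right[of ?u "3/2"] by simp
  then have big: "absv (3 * t * ?u * (?u - 3/2)^2) = 4 * absv ?u" using \<open>absv t = 1\<close> by simp
  have small: "absv (centered_orbit t 0) < 4 * absv ?u"
  proof -
    have "(1::real) \<le> 4^j" by simp
    then have "(1::real) < 4 * 4^j" by linarith
    then have "1 * absv (t - 1) < (4 * 4^j) * absv (t - 1)"
      using absv_pos[of "t - 1"] assms(2) by (intro mult_strict_right_mono) auto
    then show ?thesis using u by (simp add: absv_centered_orbit_0 mult_ac)
  qed
  have "absv (centered_orbit t (Suc j)) = absv (centered_orbit t 0 + 3 * t * ?u * (?u - 3/2)^2)"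
    unfolding centered_orbit_Suc centered_orbit_0 ..
  also have "\<dots> = absv (3 * t * ?u * (?u - 3/2)^2)"
    by (rule absv_add_eq_right) (simp only: big small)
  finally show ?case using big u by simp
qed

lemma absv_orbit_poly_0: "absv (poly (orbit_poly n) 0) = 2 * 4^n"
proof (induction n)
  case (Suc n)
  have eq: "poly (orbit_poly (Suc n)) (0::'a) = -3/2 + 27/4 * poly (orbit_poly n) 0"
    by (simp add: power2_eq_square field_simps)
  have "absv (-3/2 :: 'a) < absv (27/4 * poly (orbit_poly n) 0)"
  proof -
    have "(1::real) \<le> 4^n" by simp
    then have "(1::real) < 4 * 4^n" by linarith
    then show ?thesis using Suc by simp
  qed
  then have "absv (-3/2 + 27/4 * poly (orbit_poly n) 0) = absv (27/4 * poly (orbit_poly n) 0)"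
    by (rule absv_add_eq_right)
  then show ?case unfolding eq using Suc by simp
qed simp

lemma absv_centered_orbit_escape:
  "absv (centered_orbit (1 + 2 * 4^m) (Suc m)) = 4"
proof -
  let ?t = "1 + 2 * 4^m :: 'a"
  have near: "absv (?t - 1) = 1/2 * (1/4)^m" by simp
  have "(1/4::real)^m \<le> 1" by (simp add: power_le_one)
  then have "absv (?t - 1) < 1" using near by simp
  moreover have "?t \<noteq> 1" by simp
  moreover have "4^Suc m * absv (?t - 1) = 2"
    unfolding near by (simp flip: power_mult_distrib)
  ultimately show ?thesis
    using absv_centered_orbit[of ?t "Suc m"] by simp
qed

lemma escaping_parameter_notin_PCB_locus: "1 + 2 * 4^m \<notin> PCB_locus absv"
proof
  let ?t = "1 + 2 * 4^m :: 'a"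
  let ?z = "(fmap ?t ^^ Suc (Suc m)) 1"
  assume "?t \<in> PCB_locus absv"
  then have "bounded_orbit absv ?t ?z"
    unfolding PCB_locus_iff_bounded_orbit_1 by (rule bounded_orbit_funpow)
  moreover have "absv ?t = 1"
    using power_le_one[of "1/4::real" m] by (intro absv_eq_1_if_near_1) simp
  moreover have "absv ?z = 4"
  proof -
    have "?z = centered_orbit ?t (Suc m) - 1/2" unfolding centered_orbit_def by simp
    then show ?thesis
      using absv_diff_eq_left[of "1/2" "centered_orbit ?t (Suc m)"] absv_centered_orbit_escape
      by simp
  qed
  ultimately show False using not_bounded_orbit_if_escaping by simp
qed

lemma exists_PCB_parameter_near_escaping:
  assumes alg_closed: "\<And>p::'a poly. 0 < degree p \<Longrightarrow> \<exists>z. poly p z = 0"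
  shows "\<exists>r. r \<noteq> 0 \<and> absv r \<le> absv (2 * 4^m :: 'a) \<and> 1 + r \<in> PCB_locus absv"
proof -
  define s :: 'a where "s = 2 * 4^m"
  let ?V = "orbit_poly (Suc (Suc m)) :: 'a poly"
  let ?u = "centered_orbit (1 + s) (Suc m)"
  have abs_s: "absv s = 1/2 * (1/4)^m" unfolding s_def by simp
  have "absv (centered_orbit (1 + s) (Suc (Suc m))) = 64"
  proof -
    have u: "absv ?u = 4" unfolding s_def by (rule absv_centered_orbit_escape)
    then have "absv (?u - 3/2) = 4" using absv_diff_eq_left[of "3/2" ?u] by simp
    moreover have "absv (1 + s) = 1"
      using power_le_one[of "1/4::real" m] abs_s by (intro absv_eq_1_if_near_1) simp
    ultimately have big: "absv (3 * (1 + s) * ?u * (?u - 3/2)^2) = 64"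
      using u by (simp del: distrib_left_numeral)
    have "absv (centered_orbit (1 + s) 0) < 64"
      using power_le_one[of "1/4::real" m] abs_s by (simp add: absv_centered_orbit_0)
    then have "absv (centered_orbit (1 + s) 0 + 3 * (1 + s) * ?u * (?u - 3/2)^2) = 64"
      using absv_add_eq_right big by simp
    then show ?thesis unfolding centered_orbit_Suc[of _ "Suc m"] centered_orbit_0 .
  qed
  then have "absv s * absv (poly ?V s) = 64"
    unfolding centered_orbit_eq_poly by simp
  moreover have "absv s * absv (poly ?V 0) = 16"
    unfolding absv_orbit_poly_0 abs_s by (simp flip: power_mult_distrib)
  ultimately have "absv (poly ?V s) \<noteq> absv (poly ?V 0)" by auto
  then obtain r where root: "poly ?V r = 0" and "absv r \<le> absv s"
    using poly_has_root_in_disc[OF alg_closed] by blast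
  moreover have "r \<noteq> 0"
  proof -
    have "absv (poly ?V 0) \<noteq> 0" unfolding absv_orbit_poly_0 by simp
    then show ?thesis using root by (metis absv_0)
  qed
  moreover have "1 + r \<in> PCB_locus absv"
  proof (rule PCB_locus_if_critical_orbit_hits_minus_half)
    have "centered_orbit (1 + r) (Suc (Suc m)) = 0"
      unfolding centered_orbit_eq_poly root by simp
    then show "(fmap (1 + r) ^^ Suc (Suc (Suc m))) 1 = -1/2"
      unfolding centered_orbit_def by (simp add: eq_neg_iff_add_eq_0)
  qed
  ultimately show ?thesis unfolding s_def by blast
qed

end

theorem mainTheorem1:
  fixes absv :: "'a::field_char_0 \<Rightarrow> real"
  assumes "is_C2_model absv"
  shows "1 \<in> PCB_locus absv \<and>
    (\<forall>e>0. (\<exists>t. absv (t - 1) < e \<and> t \<notin> PCB_locus absv) \<and>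
           (\<exists>t. absv (t - 1) < e \<and> t \<in> PCB_locus absv \<and> t \<noteq> 1))"
proof -
  interpret two_adic_absv absv
    using assms unfolding is_C2_model_def by unfold_locales auto
  have alg_closed: "\<And>p::'a poly. 0 < degree p \<Longrightarrow> \<exists>z. poly p z = 0"
    using assms unfolding is_C2_model_def by blast
  have "1 \<in> PCB_locus absv"
    by (rule PCB_locus_if_critical_orbit_hits_minus_half[where n = 0]) (simp add: fmap_def)
  moreover have "(\<exists>t. absv (t - 1) < e \<and> t \<notin> PCB_locus absv) \<and>
      (\<exists>t. absv (t - 1) < e \<and> t \<in> PCB_locus absv \<and> t \<noteq> 1)" if "e > 0" for e
  proof -
    obtain m where "(1/4::real)^m < e" using real_arch_pow_inv[OF \<open>e > 0\<close>, of "1/4"] by auto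
    then have "1/2 * (1/4::real)^m < e" using \<open>e > 0\<close> by linarith
    then have near: "absv (2 * 4^m :: 'a) < e" by simp
    obtain r where "r \<noteq> 0" "absv r \<le> absv (2 * 4^m :: 'a)" "1 + r \<in> PCB_locus absv"
      using exists_PCB_parameter_near_escaping[OF alg_closed] by blast
    then show ?thesis using escaping_parameter_notin_PCB_locus[of m] near
      by (intro conjI exI[of _ "1 + 2 * 4^m"] exI[of _ "1 + r"]) auto
  qed
  ultimately show ?thesis by blast
qed

end
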